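(* Let $g:\mathbb{R}\to\mathbb{R}$ be continuously differentiable, even and $\pi$-periodic. Let $n\ge 1$ and define $G(\vec{\mu})=\frac{1}{\pi}\int_{-\pi/2}^{\pi/2}\prod_{i=0}^{n-1} g(x+\mu_i)\,dx$ for $\vec\mu=(\mu_0,\dots,\mu_{n-1})\in\mathbb{R}^n$. Let $m$ be a positive integer and $\mu_0^*\in\mathbb{R}$ arbitrary, and let $\vec{\mu}^*$ be the point with $\mu^*_i=\mu^*_0+i\,m\pi/n$ for $i=0,\dots,n-1$ (the "search strategy $(m,n)$": consecutive observation angles separated by the constant $m\pi/n$). Then $\vec\mu^*$ is a stationary point of $G$: $\frac{\partial G}{\partial\mu_i}(\vec{\mu}^* )=0$ for all $i\in\{0,\dots,n-1\}$.
   Context: $g(x)$ is the probability of not detecting a target observed at angle $x$; $G$ is the average multi-observation probability of no detection over a uniformly distributed target orientation. *)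

theory Defs
  imports "HOL-Analysis.Analysis"
begin

text \<open>Average multi-observation non-detection probability G for observation angles
  mu 0, ..., mu (n-1) (only the first n entries of mu are used).\<close>
definition G_avg :: "(real \<Rightarrow> real) \<Rightarrow> nat \<Rightarrow> (nat \<Rightarrow> real) \<Rightarrow> real" where
  "G_avg g n mu = (1 / pi) * integral {-(pi/2)..pi/2} (\<lambda>x. \<Prod>i<n. g (x + mu i))"

definition strategy :: "real \<Rightarrow> nat \<Rightarrow> nat \<Rightarrow> nat \<Rightarrow> real" where
  "strategy mu0 m n i = mu0 + real i * real m * pi / real n"

end

theory Submission
  imports Defs
begin

text \<open>Differentiating under the integral sign, the \<open>i\<close>-th partial derivative of \<open>G\<close> is
  \<open>1/\<pi>\<close> times the integral over a period of \<open>D\<^sub>i(x) = g'(x + \<mu>\<^sub>i) \<Prod>\<^sub>j\<^sub>\<noteq>\<^sub>i g(x + \<mu>\<^sub>j)\<close>.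
  For the strategy \<open>\<mu>\<^sub>j = \<mu>\<^sub>0 + j m \<pi> / n\<close>, translating \<open>x\<close> by \<open>i m \<pi> / n\<close> permutes the
  angles cyclically modulo \<open>\<pi>\<close>, so by \<open>\<pi>\<close>-periodicity all the integrals of the \<open>D\<^sub>i\<close> coincide.
  Their sum is the integral over a period of the derivative of the \<open>\<pi>\<close>-periodic function
  \<open>x \<mapsto> \<Prod>\<^sub>j g(x + \<mu>\<^sub>j)\<close>, hence zero, so each of them vanishes.\<close>

lemma periodic_add_nat_mult:
  assumes "\<And>x. f (x + p) = f x"
  shows "f (x + real k * p) = f x"
proof (induction k)
  case (Suc k)
  have "f (x + real (Suc k) * p) = f ((x + real k * p) + p)" by (simp add: algebra_simps)
  also have "\<dots> = f x" using assms Suc by simp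
  finally show ?case .
qed simp

lemma DERIV_periodic:
  assumes deriv: "\<And>x. (f has_real_derivative f' x) (at x)"
    and per: "\<And>x. f (x + p) = f x"
  shows "f' (x + p) = f' x"
proof -
  have "((\<lambda>y. f (y + p)) has_real_derivative f' (x + p)) (at x)"
    using deriv DERIV_shift by blast
  then have "(f has_real_derivative f' (x + p)) (at x)" using per by simp
  then show ?thesis using deriv DERIV_unique by blast
qed

lemma integral_periodic_window:
  fixes f :: "real \<Rightarrow> real"
  assumes cont: "continuous_on UNIV f" and per: "\<And>x. f (x + p) = f x" and p: "p \<ge> 0"
  shows "integral {a..a+p} f = integral {b..b+p} f"
proof -
  define c where "c = min a b"
  define d where "d = max a b"
  define F where "F u = integral {c..u} f" for u
  define \<phi> where "\<phi> u = F (u + p) - F u" for u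
  have cont_cd: "continuous_on {c..d+p} f" using cont continuous_on_subset by blast
  have dF: "(F has_real_derivative f u) (at u within {c..d+p})" if "u \<in> {c..d+p}" for u
    unfolding F_def by (rule integral_has_real_derivative[OF cont_cd that])
  have "(\<phi> has_real_derivative 0) (at u within {c..d})" if u: "u \<in> {c..d}" for u
  proof -
    have "(F has_real_derivative f (u + p)) (at (u + p) within (\<lambda>x. x + p) ` {c..d})"
      by (rule has_field_derivative_subset[OF dF]) (use u p in auto)
    moreover have "((\<lambda>x. x + p) has_real_derivative 1) (at u within {c..d})"
      by (auto intro!: derivative_eq_intros)
    ultimately have "((\<lambda>x. F (x + p)) has_real_derivative f (u + p)) (at u within {c..d})"
      using DERIV_image_chain by (fastforce simp: o_def)
    moreover have "(F has_real_derivative f u) (at u within {c..d})"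
      by (rule has_field_derivative_subset[OF dF]) (use u p in auto)
    ultimately show ?thesis
      using DERIV_diff per unfolding \<phi>_def by fastforce
  qed
  then obtain k where "\<forall>u\<in>{c..d}. \<phi> u = k"
    using has_field_derivative_zero_constant[of "{c..d}" \<phi>] by auto
  then have "\<phi> a = \<phi> b" by (simp add: c_def d_def)
  moreover have "\<phi> u = integral {u..u+p} f" if "u \<in> {c..d}" for u
  proof -
    have "integral {c..u} f + integral {u..u+p} f = integral {c..u+p} f"
      using Henstock_Kurzweil_Integration.integral_combine
        [OF _ _ integrable_continuous_real[OF continuous_on_subset[OF cont subset_UNIV]]] that p
      by simp
    then show ?thesis unfolding \<phi>_def F_def by simp
  qed
  ultimately show ?thesis by (simp add: c_def d_def)
qed

lemma integral_translate_periodic: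
  fixes f :: "real \<Rightarrow> real"
  assumes "continuous_on UNIV f" and "\<And>x. f (x + p) = f x" and "p \<ge> 0"
  shows "integral {a..a+p} (\<lambda>x. f (x + s)) = integral {a..a+p} f"
proof -
  have "integral {a..a+p} (\<lambda>x. f (x + s)) = integral {(a+s) - s..(a+s+p) - s} (\<lambda>x. f (x + s))"
    by (simp add: algebra_simps)
  also have "\<dots> = integral {a+s..a+s+p} f" by (rule integral_shift_real_ivl)
  also have "\<dots> = integral {a..a+p} f"
    using integral_periodic_window[where f = f and p = p and a = "a + s" and b = a, OF assms]
    by (simp add: add.assoc)
  finally show ?thesis .
qed

lemma has_integral_derivative_periodic:
  assumes "\<And>x. (f has_real_derivative f' x) (at x)" and "\<And>x. f (x + p) = f x" and "p \<ge> 0"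
  shows "(f' has_integral 0) {a..a+p}"
  using fundamental_theorem_of_calculus[of a "a+p" f f'] assms
  by (simp add: has_real_derivative_iff_has_vector_derivative[symmetric] has_field_derivative_at_within)

lemma has_real_derivative_integral_translate:
  fixes g g' h :: "real \<Rightarrow> real"
  assumes deriv: "\<And>x. (g has_real_derivative g' x) (at x)"
    and cont_g': "continuous_on UNIV g'" and cont_h: "continuous_on UNIV h"
  shows "((\<lambda>t. integral {a..b} (\<lambda>x. g (x + t) * h x)) has_real_derivative
           integral {a..b} (\<lambda>x. g' (x + t) * h x)) (at t)"
proof -
  have cont_g: "continuous_on UNIV g" using DERIV_continuous_on deriv by blast
  note [continuous_intros] = continuous_on_compose2[OF cont_g, simplified]
    continuous_on_compose2[OF cont_g', simplified] continuous_on_compose2[OF cont_h, simplified]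
  have "((\<lambda>t. integral (cbox a b) (\<lambda>x. g (x + t) * h x)) has_field_derivative
          integral (cbox a b) (\<lambda>x. g' (x + t) * h x)) (at t within UNIV)"
  proof (rule leibniz_rule_field_derivative[where fx = "\<lambda>t x. g' (x + t) * h x"])
    fix s x :: real
    show "((\<lambda>t. g (x + t) * h x) has_field_derivative g' (x + s) * h x) (at s within UNIV)"
      using deriv[of "x + s"] DERIV_shift[of g _ s x]
      by (auto intro!: derivative_eq_intros simp: add.commute)
    show "(\<lambda>x. g (x + s) * h x) integrable_on cbox a b"
      by (intro integrable_continuous continuous_intros)
  next
    show "continuous_on (UNIV \<times> cbox a b) (\<lambda>(t, x). g' (x + t) * h x)"
      unfolding split_beta by (intro continuous_intros)
  qed auto
  then show ?thesis by simp
qed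

lemma bij_betw_add_mod_punctured:
  fixes k n :: nat
  assumes "k < n"
  shows "bij_betw (\<lambda>j. (k + j) mod n) ({..<n} - {0}) ({..<n} - {k})"
proof (rule bij_betwI[where g = "\<lambda>j. (j + (n - k)) mod n"])
  show "(\<lambda>j. (k + j) mod n) \<in> {..<n} - {0} \<rightarrow> {..<n} - {k}"
    using assms by (auto simp: mod_if split: if_splits)
  show "(\<lambda>j. (j + (n - k)) mod n) \<in> {..<n} - {k} \<rightarrow> {..<n} - {0}"
    using assms by (auto simp: mod_if split: if_splits)
  show "((k + j) mod n + (n - k)) mod n = j" if "j \<in> {..<n} - {0}" for j
    using assms that by (auto simp: mod_if)
  show "(k + (j + (n - k)) mod n) mod n = j" if "j \<in> {..<n} - {k}" for j
    using assms that by (auto simp: mod_if)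
qed

text \<open>The \<open>k\<close>-th summand of the product rule for \<open>x \<mapsto> \<Prod>\<^sub>j\<^sub><\<^sub>n g (x + mu j)\<close>; it is
  also the integrand of the \<open>k\<close>-th partial derivative of \<open>G_avg\<close>.\<close>
definition prod_deriv_term ::
    "(real \<Rightarrow> real) \<Rightarrow> (real \<Rightarrow> real) \<Rightarrow> nat \<Rightarrow> (nat \<Rightarrow> real) \<Rightarrow> nat \<Rightarrow> real \<Rightarrow> real" where
  "prod_deriv_term g g' n mu k x = g' (x + mu k) * (\<Prod>j\<in>{..<n} - {k}. g (x + mu j))"

lemma continuous_on_prod_deriv_term:
  assumes "continuous_on UNIV g" and "continuous_on UNIV g'"
  shows "continuous_on UNIV (prod_deriv_term g g' n mu k)"
  unfolding prod_deriv_term_def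
  by (intro continuous_intros continuous_on_compose2[OF assms(1), simplified]
      continuous_on_compose2[OF assms(2), simplified])

lemma prod_deriv_term_periodic:
  assumes "\<And>x. g (x + p) = g x" and "\<And>x. g' (x + p) = g' x"
  shows "prod_deriv_term g g' n mu k (x + p) = prod_deriv_term g g' n mu k x"
proof -
  have "g (x + p + mu j) = g (x + mu j)" "g' (x + p + mu j) = g' (x + mu j)" for j
    using assms[of "x + mu j"] by (simp_all add: algebra_simps)
  then show ?thesis unfolding prod_deriv_term_def by simp
qed

lemma has_real_derivative_prod_translates:
  assumes "\<And>x. (g has_real_derivative g' x) (at x)"
  shows "((\<lambda>x. \<Prod>j<n. g (x + mu j)) has_real_derivative
           (\<Sum>k<n. prod_deriv_term g g' n mu k x)) (at x)"
  unfolding prod_deriv_term_def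
  by (rule has_field_derivative_prod) (use assms[of "x + mu _"] in \<open>simp add: DERIV_shift\<close>)

lemma sum_integral_prod_deriv_term:
  assumes deriv: "\<And>x. (g has_real_derivative g' x) (at x)"
    and cont: "continuous_on UNIV g'" and per: "\<And>x. g (x + p) = g x" and p: "p \<ge> 0"
  shows "(\<Sum>k<n. integral {a..a+p} (prod_deriv_term g g' n mu k)) = 0"
proof -
  have "(\<Prod>j<n. g (x + p + mu j)) = (\<Prod>j<n. g (x + mu j))" for x
    using per[of "x + mu _"] by (simp add: algebra_simps)
  then have "((\<lambda>x. \<Sum>k<n. prod_deriv_term g g' n mu k x) has_integral 0) {a..a+p}"
    by (rule has_integral_derivative_periodic[OF has_real_derivative_prod_translates[OF deriv] _ p])
  then have "integral {a..a+p} (\<lambda>x. \<Sum>k<n. prod_deriv_term g g' n mu k x) = 0"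
    by (rule integral_unique)
  moreover have "prod_deriv_term g g' n mu k integrable_on {a..a+p}" for k
    using continuous_on_prod_deriv_term[OF DERIV_continuous_on[OF deriv] cont]
    by (metis continuous_on_subset integrable_continuous_real subset_UNIV)
  then have "integral {a..a+p} (\<lambda>x. \<Sum>k<n. prod_deriv_term g g' n mu k x)
      = (\<Sum>k<n. integral {a..a+p} (prod_deriv_term g g' n mu k))"
    by (intro integral_sum) auto
  ultimately show ?thesis by simp
qed

lemma G_avg_fun_upd:
  assumes "i < n"
  shows "G_avg g n (mu(i := t))
    = 1 / pi * integral {-(pi/2)..pi/2} (\<lambda>x. g (x + t) * (\<Prod>j\<in>{..<n} - {i}. g (x + mu j)))"
proof -
  have "(\<Prod>j<n. g (x + (mu(i := t)) j)) = g (x + t) * (\<Prod>j\<in>{..<n} - {i}. g (x + mu j))" for x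
    using prod.remove[of "{..<n}" i "\<lambda>j. g (x + (mu(i := t)) j)"] assms
    by (simp add: prod.cong[of "{..<n} - {i}" _ "\<lambda>j. g (x + (mu(i := t)) j)"])
  then show ?thesis unfolding G_avg_def by simp
qed

lemma has_real_derivative_G_avg_coordinate:
  assumes deriv: "\<And>x. (g has_real_derivative g' x) (at x)"
    and cont: "continuous_on UNIV g'" and i: "i < n"
  shows "((\<lambda>t. G_avg g n (mu(i := t))) has_real_derivative
           1 / pi * integral {-(pi/2)..pi/2} (prod_deriv_term g g' n mu i)) (at (mu i))"
proof -
  have "continuous_on UNIV (\<lambda>x. \<Prod>j\<in>{..<n} - {i}. g (x + mu j))"
    by (intro continuous_intros continuous_on_compose2[OF DERIV_continuous_on[OF deriv], simplified])
  from DERIV_cmult[OF has_real_derivative_integral_translate[OF deriv cont this], of "1 / pi"]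
  show ?thesis unfolding G_avg_fun_upd[OF i] prod_deriv_term_def .
qed

lemma strategy_add:
  "strategy mu0 m n (k + j) = strategy mu0 m n j + real k * (real m * pi / real n)"
  unfolding strategy_def by (simp add: algebra_simps add_divide_distrib)

lemma periodic_strategy_mod:
  assumes "\<And>x. f (x + pi) = f x"
  shows "f (y + strategy mu0 m n (j mod n)) = f (y + strategy mu0 m n j)"
proof (cases "n = 0")
  case False
  have "strategy mu0 m n j = strategy mu0 m n (j mod n) + real (m * (j div n)) * pi"
    using strategy_add[of mu0 m n "n * (j div n)" "j mod n"] False by (simp add: add.commute)
  then show ?thesis
    using periodic_add_nat_mult[of f pi, OF assms, of "y + strategy mu0 m n (j mod n)" "m * (j div n)"]
    by (simp add: algebra_simps)
qed simp

lemma prod_deriv_term_strategy: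
  assumes per: "\<And>x. g (x + pi) = g x" and k: "k < n"
  shows "prod_deriv_term g g' n (strategy mu0 m n) k x
    = prod_deriv_term g g' n (strategy mu0 m n) 0 (x + real k * (real m * pi / real n))"
proof -
  let ?s = "strategy mu0 m n" and ?c = "real k * (real m * pi / real n)"
  have "(\<Prod>j\<in>{..<n} - {k}. g (x + ?s j)) = (\<Prod>j\<in>{..<n} - {0}. g (x + ?s ((k + j) mod n)))"
    using prod.reindex_bij_betw[OF bij_betw_add_mod_punctured[OF k], of "\<lambda>j. g (x + ?s j)"] by simp
  also have "\<dots> = (\<Prod>j\<in>{..<n} - {0}. g (x + ?c + ?s j))"
  proof (rule prod.cong)
    fix j
    have "g (x + ?s ((k + j) mod n)) = g (x + ?s (k + j))"
      by (rule periodic_strategy_mod[where f = g, OF per])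
    then show "g (x + ?s ((k + j) mod n)) = g (x + ?c + ?s j)"
      unfolding strategy_add by (simp add: algebra_simps)
  qed simp
  finally show ?thesis
    unfolding prod_deriv_term_def using strategy_add[of mu0 m n k 0] by (simp add: algebra_simps)
qed

lemma integral_prod_deriv_term_strategy:
  assumes deriv: "\<And>x. (g has_real_derivative g' x) (at x)"
    and cont: "continuous_on UNIV g'" and per: "\<And>x. g (x + pi) = g x" and k: "k < n"
  shows "integral {-(pi/2)..pi/2} (prod_deriv_term g g' n (strategy mu0 m n) k)
    = integral {-(pi/2)..pi/2} (prod_deriv_term g g' n (strategy mu0 m n) 0)"
proof -
  let ?q = "prod_deriv_term g g' n (strategy mu0 m n) 0"
  have "prod_deriv_term g g' n (strategy mu0 m n) k = (\<lambda>x. ?q (x + real k * (real m * pi / real n)))"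
    by (rule ext) (rule prod_deriv_term_strategy[where g = g, OF per k])
  moreover have "integral {-(pi/2)..-(pi/2) + pi} (\<lambda>x. ?q (x + s)) = integral {-(pi/2)..-(pi/2) + pi} ?q"
    for s
  proof (rule integral_translate_periodic)
    show "continuous_on UNIV ?q"
      by (rule continuous_on_prod_deriv_term[OF DERIV_continuous_on[OF deriv] cont])
    show "?q (x + pi) = ?q x" for x
      by (rule prod_deriv_term_periodic[where g = g and g' = g', OF per DERIV_periodic[OF deriv per]])
  qed simp
  ultimately show ?thesis by simp
qed

theorem lemma3p2:
  fixes g g' :: "real \<Rightarrow> real" and n m :: nat and mu0 :: real
  assumes deriv: "\<And>x. (g has_real_derivative g' x) (at x)"
    and cont: "continuous_on UNIV g'"
    and even: "\<And>x. g (- x) = g x"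
    and periodic: "\<And>x. g (x + pi) = g x"
    and n: "n \<ge> 1"
    and m: "m > 0"
  shows "\<forall>i<n. ((\<lambda>t. G_avg g n ((strategy mu0 m n)(i := t)))
                   has_real_derivative 0) (at (strategy mu0 m n i))"
proof (intro allI impI)
  fix i assume i: "i < n"
  define D where "D k = integral {-(pi/2)..pi/2} (prod_deriv_term g g' n (strategy mu0 m n) k)" for k
  have D_eq: "D k = D 0" if "k < n" for k
    using integral_prod_deriv_term_strategy[OF deriv cont periodic that] by (simp add: D_def)
  have "(\<Sum>k<n. D k) = (\<Sum>k<n. D 0)" by (rule sum.cong[OF refl D_eq]) simp
  moreover have "(\<Sum>k<n. D k) = 0"
    using sum_integral_prod_deriv_term[OF deriv cont periodic, where a = "-(pi/2)"] by (simp add: D_def)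
  ultimately have "D 0 = 0" using n by simp
  then have "D i = 0" using D_eq[OF i] by simp
  with has_real_derivative_G_avg_coordinate[OF deriv cont i, of "strategy mu0 m n"]
  show "((\<lambda>t. G_avg g n ((strategy mu0 m n)(i := t))) has_real_derivative 0) (at (strategy mu0 m n i))"
    by (simp add: D_def)
qed

end
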